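(* Let $X$ be a Minkowski plane with unit ball $B$. For $i=1,2,3$ let $\ell_i$ be a supporting line of $B$ and $A_i=B\cap\ell_i$. Suppose that for all distinct $i,j\in\{1,2,3\}$ there exist $\mathbf{a}_i\in A_i$ and $\mathbf{a}_j\in A_j$ with $\|\mathbf{a}_i+\mathbf{a}_j\|=1$, and that $A_1\cup A_2\cup A_3$ is not contained in any closed half-plane bounded by a line through the origin. Then there exist $\mathbf{a}_i\in A_i$ ($i=1,2,3$) such that $\mathbf{a}_1+\mathbf{a}_2+\mathbf{a}_3=\mathbf{o}$.
   Context: A Minkowski plane is a two-dimensional real normed space $(X,\|\cdot\|)$ with unit ball $B=\{\mathbf{x}:\|\mathbf{x}\|\le1\}$. *)

theory Defs
  imports "HOL-Analysis.Analysis"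
begin

text \<open>A line in a real vector space of dimension 2 is the level set {x. f x = c} of a
nonzero linear functional f; the two closed half-planes bounded by it are
{x. f x \<le> c} and {x. f x \<ge> c} (the latter is {x. (-f) x \<le> -c}).\<close>

definition supporting_line :: "'a::real_vector set \<Rightarrow> 'a set \<Rightarrow> bool" where
  "supporting_line L K \<longleftrightarrow>
     (\<exists>f c. linear (f :: 'a \<Rightarrow> real) \<and> (\<exists>x. f x \<noteq> 0) \<and> L = {x. f x = c}
        \<and> K \<subseteq> {x. f x \<le> c} \<and> L \<inter> K \<noteq> {})"

definition in_origin_halfplane :: "'a::real_vector set \<Rightarrow> bool" where
  "in_origin_halfplane S \<longleftrightarrow>
     (\<exists>f. linear (f :: 'a \<Rightarrow> real) \<and> (\<exists>x. f x \<noteq> 0) \<and> S \<subseteq> {x. f x \<le> 0})"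

end

theory Submission
  imports Defs
begin

text \<open>Every supporting line of the unit ball is {g = 1} for a linear functional g with
  g x \<le> norm x, and A i is the face of the ball exposed by g i.  In the plane g 1, g 2, g 3 satisfy
  a nontrivial linear relation.  Its coefficients cannot have mixed signs: otherwise some g k is
  a nonnegative combination of the other two, and the unit sums of the hypothesis force g k \<ge> 0
  on all three faces, i.e. the faces lie in a half-plane through the origin.  From a relation with
  nonnegative coefficients and the unit sums one gets, for every k, points a i, a j of the other two
  faces with g k (a i + a j) = -1, i.e. a zero-sum triple on the three lines whose entries i and j
  lie in the ball.  Zero-sum triples on the three lines depend affinely on their first entry, so of
  the three triples so obtained one lies between the other two, and by convexity all its entries
  lie in the ball.\<close>

section \<open>Linear functionals on a plane\<close>

lemma linear_functional_eqs:
  assumes "linear (g :: 'a::real_vector \<Rightarrow> real)"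
  shows "g (x + y) = g x + g y" "g (x - y) = g x - g y" "g (- x) = - g x"
    "g (c *\<^sub>R x) = c * g x" "g 0 = 0"
  using assms by (simp_all add: linear_add linear_diff linear_neg linear_cmul linear_0)

lemma dim2_obtain_basis:
  assumes "dim (UNIV :: 'a set) = 2"
  obtains v w :: "'a::real_vector" where "independent {v, w}" "v \<noteq> w" "UNIV \<subseteq> span {v, w}"
proof -
  obtain B :: "'a set" where B: "independent B" "UNIV \<subseteq> span B" "card B = 2"
    using basis_exists[of "UNIV :: 'a set"] assms by auto
  then show thesis by (metis card_2_iff that)
qed

lemma dim2_spanned_by_pair:
  assumes "dim (UNIV :: 'a::real_vector set) = 2" "v \<noteq> 0" "\<forall>t. w \<noteq> t *\<^sub>R v"
  shows "\<exists>a b. (x::'a) = a *\<^sub>R v + b *\<^sub>R w"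
proof -
  obtain b1 b2 :: 'a where B: "independent {b1, b2}" "b1 \<noteq> b2" "UNIV \<subseteq> span {b1, b2}"
    using dim2_obtain_basis[OF assms(1)] .
  have "w \<notin> span {v}" "w \<noteq> v"
    using assms(3) by (auto simp: span_singleton) (metis scaleR_one)
  then have indep: "independent {w, v}"
    using assms(2) by (simp add: independent_insert)
  have "x \<in> span {w, v}"
  proof (rule ccontr)
    assume "x \<notin> span {w, v}"
    moreover have "x \<notin> {w, v}" using calculation span_base by blast
    ultimately have "independent {x, w, v}" "card {x, w, v} = 3"
      using indep \<open>w \<noteq> v\<close> by (auto simp: independent_insert)
    moreover have "card {x, w, v} \<le> card {b1, b2}"
      using independent_span_bound[of "{b1, b2}" "{x, w, v}"] B(3) calculation(1) by auto
    ultimately show False using B(2) by simp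
  qed
  then obtain b a where "x - b *\<^sub>R w = a *\<^sub>R v"
    by (auto simp: span_breakdown_eq span_singleton)
  then show ?thesis by (metis add.commute diff_add_cancel)
qed

lemma dim2_obtain_pair:
  assumes "dim (UNIV :: 'a set) = 2"
  obtains v w :: "'a::real_vector" where "v \<noteq> 0" "\<forall>t. w \<noteq> t *\<^sub>R v"
proof -
  obtain w v :: 'a where B: "independent {w, v}" "w \<noteq> v" "UNIV \<subseteq> span {w, v}"
    using dim2_obtain_basis[OF assms] .
  have "v \<noteq> 0" using B(1) by (metis dependent_zero insertI1 insert_commute)
  moreover have "w \<notin> span {v}" using B(1,2) independent_insert[of w "{v}"] by simp
  ultimately show thesis by (intro that) (auto simp: span_singleton)
qed

lemma dim2_kernel_nonzero:
  assumes "dim (UNIV :: 'a::real_vector set) = 2" "linear (g :: 'a \<Rightarrow> real)"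
  shows "\<exists>e. e \<noteq> 0 \<and> g e = 0"
proof -
  obtain v w :: 'a where v: "v \<noteq> 0" and w: "\<forall>t. w \<noteq> t *\<^sub>R v"
    using dim2_obtain_pair[OF assms(1)] by blast
  show ?thesis
  proof (cases "g v = 0")
    case False
    have "w - (g w / g v) *\<^sub>R v \<noteq> 0" using w by auto
    moreover have "g (w - (g w / g v) *\<^sub>R v) = 0"
      using False by (simp add: linear_functional_eqs[OF assms(2)])
    ultimately show ?thesis by blast
  qed (use v in blast)
qed

lemma dim2_kernel_line:
  assumes "dim (UNIV :: 'a::real_vector set) = 2" "linear (g :: 'a \<Rightarrow> real)"
    and "g u \<noteq> 0" "e \<noteq> 0" "g e = 0" "g d = 0"
  shows "\<exists>t. d = t *\<^sub>R e"
proof (rule ccontr)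
  assume "\<nexists>t. d = t *\<^sub>R e"
  then obtain a b where "u = a *\<^sub>R e + b *\<^sub>R d"
    using dim2_spanned_by_pair[OF assms(1,4)] by blast
  then show False
    using assms by (simp add: linear_functional_eqs[OF assms(2)])
qed

lemma dim2_proportional_of_common_kernel:
  assumes "dim (UNIV :: 'a::real_vector set) = 2" "linear (g :: 'a \<Rightarrow> real)" "linear h"
    and "g u \<noteq> 0" "d \<noteq> 0" "g d = 0" "h d = 0"
  shows "\<exists>l. \<forall>x. h x = l * g x"
proof (intro exI allI)
  fix x
  have "\<forall>t. u \<noteq> t *\<^sub>R d"
    using assms(4,6) by (auto simp: linear_functional_eqs[OF assms(2)])
  then obtain a b where "x = a *\<^sub>R d + b *\<^sub>R u"
    using dim2_spanned_by_pair[OF assms(1,5)] by blast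
  then have "h x = b * h u" "g x = b * g u"
    using assms(6,7) by (simp_all add: linear_functional_eqs assms(2,3))
  then show "h x = (h u / g u) * g x" using assms(4) by simp
qed

lemma dim2_functionals_dependent:
  assumes "dim (UNIV :: 'a::real_vector set) = 2"
    and "linear (g1 :: 'a \<Rightarrow> real)" "linear g2" "linear g3"
  shows "\<exists>a b c. (a, b, c) \<noteq> (0, 0, 0) \<and> (\<forall>x. a * g1 x + b * g2 x + c * g3 x = 0)"
proof (cases "\<exists>u. g1 u \<noteq> 0")
  case False
  then have "\<forall>x. 1 * g1 x + 0 * g2 x + 0 * g3 x = 0" by simp
  then show ?thesis by (metis one_neq_zero prod.inject)
next
  case True
  then obtain u where u: "g1 u \<noteq> 0" by blast
  obtain e where e: "e \<noteq> 0" "g1 e = 0" using dim2_kernel_nonzero[OF assms(1,2)] by blast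
  show ?thesis
  proof (cases "g2 e = 0")
    case True
    then obtain l where "\<forall>x. g2 x = l * g1 x"
      using dim2_proportional_of_common_kernel[OF assms(1,2,3) u e] by blast
    then have "\<forall>x. l * g1 x + (- 1) * g2 x + 0 * g3 x = 0" by simp
    then show ?thesis by (metis neg_equal_0_iff_equal one_neq_zero prod.inject)
  next
    case False
    define h where "h x = g3 e * g2 x - g2 e * g3 x" for x
    have "linear h"
      unfolding h_def using assms(3,4)
      by (auto intro!: linearI simp: linear_functional_eqs algebra_simps)
    moreover have "h e = 0" by (simp add: h_def)
    ultimately obtain l where l: "\<forall>x. h x = l * g1 x"
      using dim2_proportional_of_common_kernel[OF assms(1,2) _ u e] by blast
    have "(- l) * g1 x + g3 e * g2 x + (- g2 e) * g3 x = 0" for x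
      using l[rule_format, of x] unfolding h_def by (simp add: algebra_simps)
    then show ?thesis using False by (metis neg_equal_0_iff_equal prod.inject)
  qed
qed

section \<open>Faces of the unit ball\<close>

definition dual_ball :: "('a::real_normed_vector \<Rightarrow> real) \<Rightarrow> bool" where
  "dual_ball g \<longleftrightarrow> linear g \<and> (\<forall>x. g x \<le> norm x)"

definition face :: "('a::real_normed_vector \<Rightarrow> real) \<Rightarrow> 'a set" where
  "face g = cball 0 1 \<inter> {x. g x = 1}"

lemma mem_face [simp]: "x \<in> face g \<longleftrightarrow> norm x \<le> 1 \<and> g x = 1"
  by (simp add: face_def)

lemma dual_ball_linear: "dual_ball g \<Longrightarrow> linear g"
  by (simp add: dual_ball_def)

lemma dual_ball_abs_le:
  assumes "dual_ball g"
  shows "\<bar>g x\<bar> \<le> norm x"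
  using assms linear_functional_eqs(3)[of g x] unfolding dual_ball_def
  by (metis abs_le_iff norm_minus_cancel)

lemma convex_face: "linear g \<Longrightarrow> convex (face g)"
proof -
  assume "linear g"
  then have "convex (g -` {1})" by (simp add: convex_linear_vimage)
  moreover have "face g = cball 0 1 \<inter> g -` {1}" by (auto simp: face_def)
  ultimately show "convex (face g)" by (simp add: convex_Int)
qed

lemma dual_ball_of_supporting_line:
  assumes "supporting_line L (cball (0::'a::real_normed_vector) 1)"
  shows "\<exists>g. dual_ball g \<and> L = {x. g x = 1}"
proof -
  obtain f c where f: "linear (f :: 'a \<Rightarrow> real)" "\<exists>x. f x \<noteq> 0" "L = {x. f x = c}"
    and ball: "cball 0 1 \<subseteq> {x. f x \<le> c}"
    using assms unfolding supporting_line_def by blast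
  note F = linear_functional_eqs[OF f(1)]
  have fy: "f y \<le> c * norm y" for y
  proof (cases "y = 0")
    case True then show ?thesis using ball F(5) by auto
  next
    case False
    then have "(1 / norm y) *\<^sub>R y \<in> cball 0 1" by simp
    then have "f ((1 / norm y) *\<^sub>R y) \<le> c" using ball by blast
    then show ?thesis using False F(4) by (simp add: field_simps)
  qed
  obtain x0 where x0: "f x0 \<noteq> 0" using f(2) by blast
  have "c > 0"
  proof (rule ccontr)
    assume "\<not> c > 0"
    then have "f x0 \<le> 0" "f (- x0) \<le> 0" using fy[of x0] fy[of "- x0"]
      by (auto intro: order_trans[OF _ mult_nonpos_nonneg])
    then show False using x0 F(3) by simp
  qed
  have "linear (\<lambda>x. f x / c)" by (rule linearI) (simp_all add: F add_divide_distrib)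
  moreover have "\<forall>y. f y / c \<le> norm y" using fy \<open>c > 0\<close> by (simp add: field_simps mult.commute)
  moreover have "L = {x. f x / c = 1}" using \<open>c > 0\<close> f(3) by auto
  ultimately show ?thesis unfolding dual_ball_def by blast
qed

definition unit_sum_pair :: "('a::real_normed_vector \<Rightarrow> real) \<Rightarrow> ('a \<Rightarrow> real) \<Rightarrow> bool" where
  "unit_sum_pair g h \<longleftrightarrow> (\<exists>a\<in>face g. \<exists>b\<in>face h. norm (a + b) = 1)"

lemma unit_sum_pair_proportional:
  assumes "dual_ball g" "dual_ball h" "unit_sum_pair g h" "\<forall>x. h x = l * g x"
  shows "l = -1"
proof -
  obtain a b where a: "norm a \<le> 1" "g a = 1" and b: "norm b \<le> 1" "h b = 1"
    and ab: "norm (a + b) = 1"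
    using assms(3) unfolding unit_sum_pair_def by auto
  have "\<bar>l\<bar> \<le> 1" using dual_ball_abs_le[OF assms(2), of a] assms(4) a by simp
  moreover have "1 = \<bar>l\<bar> * \<bar>g b\<bar>" using assms(4) b by (metis abs_mult abs_one)
  moreover have "\<bar>g b\<bar> \<le> 1" using dual_ball_abs_le[OF assms(1), of b] b by simp
  ultimately have "\<bar>l\<bar> = 1" using mult_left_le[of "\<bar>g b\<bar>" "\<bar>l\<bar>"] by linarith
  moreover have "l \<noteq> 1"
  proof
    assume "l = 1"
    then have "g (a + b) = 2"
      using assms(1,4) a b by (simp add: dual_ball_def linear_functional_eqs)
    then show False using dual_ball_abs_le[OF assms(1), of "a + b"] ab by simp
  qed
  ultimately show ?thesis by linarith
qed

definition face_sum_below :: "('a::real_normed_vector \<Rightarrow> real) \<Rightarrow> ('a \<Rightarrow> real) \<Rightarrow> ('a \<Rightarrow> real) \<Rightarrow> bool" where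
  "face_sum_below g h k \<longleftrightarrow> (\<exists>a\<in>face g. \<exists>b\<in>face h. k (a + b) \<le> -1)"

lemma face_sum_unit_independent:
  assumes "dual_ball g" "dual_ball h" "a \<in> face g" "b \<in> face h" "norm (a + b) = 1"
  shows "a \<noteq> 0" "\<forall>t. b \<noteq> t *\<^sub>R a"
proof -
  show "a \<noteq> 0" using assms(1,3) by (auto simp: dual_ball_def linear_0)
  have "norm a = 1" "norm b = 1"
    using assms dual_ball_abs_le[of g a] dual_ball_abs_le[of h b] by auto
  show "\<forall>t. b \<noteq> t *\<^sub>R a"
  proof (intro allI notI)
    fix t assume "b = t *\<^sub>R a"
    moreover have "a + t *\<^sub>R a = (1 + t) *\<^sub>R a" by (simp add: algebra_simps)
    ultimately have "\<bar>t\<bar> = 1" "\<bar>1 + t\<bar> = 1"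
      using \<open>norm a = 1\<close> \<open>norm b = 1\<close> assms(5) by auto
    then show False by linarith
  qed
qed

section \<open>Sums of points of two faces\<close>

text \<open>x + y is a combination of x, y and b with nonnegative coefficients of sum less than 1.\<close>
lemma norm_sum_lt_one_inside_triangle:
  fixes x y b :: "'a::real_normed_vector"
  assumes "norm x \<le> 1" "norm y \<le> 1" "norm b \<le> 1"
    and "b = (1 + P) *\<^sub>R x + (1 + Q) *\<^sub>R y" "0 < P" "0 < Q"
  shows "norm (x + y) < 1"
proof -
  define l where "l = 1 / (1 + max P Q)"
  define l1 where "l1 = 1 - l * (1 + P)"
  define l2 where "l2 = 1 - l * (1 + Q)"
  have M: "P \<le> max P Q" "Q \<le> max P Q" "max P Q < P + Q" "0 < max P Q"
    using assms(5,6) by auto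
  then have "0 < l" "0 \<le> l1" "0 \<le> l2" "1 < l * (1 + P + Q)"
    by (simp_all add: l_def l1_def l2_def field_simps)
  then have "l1 + l2 + l < 1" by (simp add: l1_def l2_def algebra_simps)
  have "x + y = l1 *\<^sub>R x + l2 *\<^sub>R y + l *\<^sub>R b"
    by (simp add: assms(4) l1_def l2_def algebra_simps)
  then have "norm (x + y) \<le> norm (l1 *\<^sub>R x) + norm (l2 *\<^sub>R y) + norm (l *\<^sub>R b)"
    by (metis norm_triangle_ineq add_right_mono order_trans)
  also have "\<dots> = l1 * norm x + l2 * norm y + l * norm b"
    using \<open>0 < l\<close> \<open>0 \<le> l1\<close> \<open>0 \<le> l2\<close> by simp
  also have "\<dots> \<le> l1 + l2 + l"
    using assms(1-3) \<open>0 < l\<close> \<open>0 \<le> l1\<close> \<open>0 \<le> l2\<close>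
    by (intro add_mono mult_left_le) auto
  finally show ?thesis using \<open>l1 + l2 + l < 1\<close> by linarith
qed

text \<open>Otherwise xi + xj would lie in the interior of the convex hull of 0, xi, xj and b.\<close>
lemma face_sum_not_dominated:
  fixes gi gj :: "'a::real_normed_vector \<Rightarrow> real"
  assumes dim2: "dim (UNIV :: 'a set) = 2"
    and gi: "dual_ball gi" and gj: "dual_ball gj"
    and xi: "xi \<in> face gi" and xj: "xj \<in> face gj" and s: "norm (xi + xj) = 1"
    and b: "norm b \<le> 1" "gi (xi + xj) < gi b"
  shows "gj b \<le> gj (xi + xj)"
proof (rule ccontr)
  assume dominated: "\<not> ?thesis"
  note Li = linear_functional_eqs[OF gi[THEN dual_ball_linear]]
  note Lj = linear_functional_eqs[OF gj[THEN dual_ball_linear]]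
  obtain P Q where PQ: "b - (xi + xj) = P *\<^sub>R xi + Q *\<^sub>R xj"
    using dim2_spanned_by_pair[OF dim2] face_sum_unit_independent[OF gi gj xi xj s] by blast
  define c where "c = - gj xi"
  define d where "d = - gi xj"
  have "0 \<le> c" "0 \<le> d"
    using dual_ball_abs_le[OF gj, of "xi + xj"] dual_ball_abs_le[OF gi, of "xi + xj"] s xi xj
    by (auto simp: c_def d_def Li Lj)
  moreover have "c \<le> 1" "d \<le> 1"
    using dual_ball_abs_le[OF gj, of xi] dual_ball_abs_le[OF gi, of xj] xi xj
    by (auto simp: c_def d_def)
  ultimately have cd: "0 \<le> 1 - c * d" by (simp add: mult_le_one)
  have eX: "0 < P - d * Q"
    using b(2) arg_cong[OF PQ, of gi] xi by (simp add: Li d_def algebra_simps)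
  have eY: "0 < Q - c * P"
    using dominated arg_cong[OF PQ, of gj] xj by (simp add: Lj c_def algebra_simps)
  have "P * (1 - c * d) = (P - d * Q) + d * (Q - c * P)"
    "Q * (1 - c * d) = (Q - c * P) + c * (P - d * Q)" by (simp_all add: algebra_simps)
  then have "0 < P * (1 - c * d)" "0 < Q * (1 - c * d)"
    using eX eY \<open>0 \<le> c\<close> \<open>0 \<le> d\<close> by (simp_all add: add_pos_nonneg)
  then have "0 < P" "0 < Q" using cd by (simp_all add: zero_less_mult_iff)
  have "b = (1 + P) *\<^sub>R xi + (1 + Q) *\<^sub>R xj"
    using PQ by (simp add: algebra_simps)
  then have "norm (xi + xj) < 1"
    using norm_sum_lt_one_inside_triangle[of xi xj b P Q] b(1) xi xj \<open>0 < P\<close> \<open>0 < Q\<close> by simp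
  then show False using s by simp
qed

lemma convex_weight_separating:
  fixes \<alpha> \<beta> A1 A2 B1 B2 :: real
  assumes "0 \<le> \<alpha>" "0 \<le> \<beta>" "0 \<le> A2" "0 \<le> B2" "\<beta> * B2 < \<alpha> * A1" "\<alpha> * A2 < \<beta> * B1"
  shows "\<exists>\<theta>. 0 \<le> \<theta> \<and> \<theta> \<le> 1 \<and> (1 - \<theta>) * A2 < \<theta> * A1 \<and> \<theta> * B2 < (1 - \<theta>) * B1"
proof -
  have "0 \<le> \<beta> * B2" "0 \<le> \<alpha> * A2" using assms(1-4) by simp_all
  then have "0 < \<alpha> * A1" "0 < \<beta> * B1" using assms(5,6) by linarith+
  then have "0 < A1" "0 < B1" using assms(1,2) by (simp_all add: zero_less_mult_iff)
  have "(\<beta> * B2) * (\<alpha> * A2) < (\<alpha> * A1) * (\<beta> * B1)"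
    using mult_strict_mono'[OF assms(5,6)] \<open>0 \<le> \<beta> * B2\<close> \<open>0 \<le> \<alpha> * A2\<close> by simp
  then have "(\<alpha> * \<beta>) * (A2 * B2) < (\<alpha> * \<beta>) * (A1 * B1)" by (simp only: ac_simps)
  then have det: "A2 * B2 < A1 * B1"
    using assms(1,2) by (auto intro: mult_left_less_imp_less)
  define w1 where "w1 = B1 * (A1 + A2)"
  define w2 where "w2 = A1 * (B1 + B2)"
  have "0 < w1" "0 < w2" unfolding w1_def w2_def
    using \<open>0 < A1\<close> \<open>0 < B1\<close> assms(3,4) by (intro mult_pos_pos; linarith)+
  have "w1 * A1 - w2 * A2 = A1 * (A1 * B1 - A2 * B2)"
    "w2 * B1 - w1 * B2 = B1 * (A1 * B1 - A2 * B2)" by (simp_all add: w1_def w2_def algebra_simps)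
  moreover have "0 < A1 * (A1 * B1 - A2 * B2)" "0 < B1 * (A1 * B1 - A2 * B2)"
    using \<open>0 < A1\<close> \<open>0 < B1\<close> det by simp_all
  ultimately have "w2 * A2 < w1 * A1" "w1 * B2 < w2 * B1" by linarith+
  define \<theta> where "\<theta> = w1 / (w1 + w2)"
  have "1 - \<theta> = w2 / (w1 + w2)" using \<open>0 < w1\<close> \<open>0 < w2\<close> by (simp add: \<theta>_def field_simps)
  then have "(1 - \<theta>) * A2 < \<theta> * A1" "\<theta> * B2 < (1 - \<theta>) * B1"
    using \<open>w2 * A2 < w1 * A1\<close> \<open>w1 * B2 < w2 * B1\<close> \<open>0 < w1\<close> \<open>0 < w2\<close>
    by (simp_all add: \<theta>_def divide_simps mult.commute)
  moreover have "0 \<le> \<theta>" "\<theta> \<le> 1" using \<open>0 < w1\<close> \<open>0 < w2\<close> by (simp_all add: \<theta>_def)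
  ultimately show ?thesis by blast
qed

lemma convex_point_dominating:
  assumes "convex S" "p \<in> S" "q \<in> S" "linear (gi :: 'a::real_vector \<Rightarrow> real)" "linear gj"
    and "0 \<le> \<alpha>" "0 \<le> \<beta>" "gi q \<le> u1" "gj p \<le> u2"
    and "0 < \<alpha> * (gi p - u1) + \<beta> * (gj p - u2)" "0 < \<alpha> * (gi q - u1) + \<beta> * (gj q - u2)"
  shows "\<exists>b\<in>S. u1 < gi b \<and> u2 < gj b"
proof -
  obtain \<theta> where \<theta>: "0 \<le> \<theta>" "\<theta> \<le> 1"
    "(1 - \<theta>) * (u1 - gi q) < \<theta> * (gi p - u1)" "\<theta> * (u2 - gj p) < (1 - \<theta>) * (gj q - u2)"
    using convex_weight_separating[of \<alpha> \<beta> "u1 - gi q" "u2 - gj p" "gi p - u1" "gj q - u2"] assms(6-11)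
    by (auto simp: algebra_simps)
  define b where "b = (1 - \<theta>) *\<^sub>R q + \<theta> *\<^sub>R p"
  have "b \<in> S" unfolding b_def using convexD_alt[OF assms(1,3,2) \<theta>(1,2)] .
  moreover have "u1 < gi b" "u2 < gj b"
    using \<theta>(3,4) by (simp_all add: b_def linear_functional_eqs assms(4,5) algebra_simps)
  ultimately show ?thesis by blast
qed

text \<open>Take ai, aj maximising gj resp. gi among the given points.  If gk (ai + aj) > -1, both
  - zk and - wk lie strictly on the side of ai + aj where \<alpha> gi + \<beta> gj is larger, and a point
  of the segment between them dominates ai + aj, hence xi + xj, in both gi and gj.\<close>
lemma face_sum_below_of_nonneg_combination:
  fixes gi gj gk :: "'a::real_normed_vector \<Rightarrow> real"
  assumes dim2: "dim (UNIV :: 'a set) = 2"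
    and gi: "dual_ball gi" and gj: "dual_ball gj" and gk: "dual_ball gk"
    and comb: "\<forall>x. - gk x = \<alpha> * gi x + \<beta> * gj x" "0 \<le> \<alpha>" "0 \<le> \<beta>"
    and "unit_sum_pair gi gj" "unit_sum_pair gi gk" "unit_sum_pair gj gk"
  shows "face_sum_below gi gj gk"
proof -
  note Li = linear_functional_eqs[OF gi[THEN dual_ball_linear]]
  note Lj = linear_functional_eqs[OF gj[THEN dual_ball_linear]]
  note Lk = linear_functional_eqs[OF gk[THEN dual_ball_linear]]
  obtain xi xj where xi: "xi \<in> face gi" and xj: "xj \<in> face gj" and x: "norm (xi + xj) = 1"
    using \<open>unit_sum_pair gi gj\<close> unfolding unit_sum_pair_def by blast
  obtain zi zk where zi: "zi \<in> face gi" and zk: "zk \<in> face gk" and z: "norm (zi + zk) = 1"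
    using \<open>unit_sum_pair gi gk\<close> unfolding unit_sum_pair_def by blast
  obtain wj wk where wj: "wj \<in> face gj" and wk: "wk \<in> face gk" and w: "norm (wj + wk) = 1"
    using \<open>unit_sum_pair gj gk\<close> unfolding unit_sum_pair_def by blast
  define ai where "ai = (if gj xi \<le> gj zi then zi else xi)"
  define aj where "aj = (if gi xj \<le> gi wj then wj else xj)"
  have ai: "ai \<in> face gi" "gj xi \<le> gj ai" "gj zi \<le> gj ai" using xi zi by (auto simp: ai_def)
  have aj: "aj \<in> face gj" "gi xj \<le> gi aj" "gi wj \<le> gi aj" using xj wj by (auto simp: aj_def)
  show ?thesis
  proof (rule ccontr)
    assume "\<not> ?thesis"
    then have above: "-1 < gk (ai + aj)"
      using ai(1) aj(1) unfolding face_sum_below_def by force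
    have "\<bar>gi (wj + wk)\<bar> \<le> 1" "\<bar>gj (zi + zk)\<bar> \<le> 1"
      using dual_ball_abs_le[OF gi, of "wj + wk"] dual_ball_abs_le[OF gj, of "zi + zk"] w z by auto
    then have q: "gi (- wk) \<le> gi (ai + aj)" and p: "gj (- zk) \<le> gj (ai + aj)"
      using ai aj wj zk by (auto simp: Li Lj)
    have sep: "0 < \<alpha> * (gi (- v) - gi (ai + aj)) + \<beta> * (gj (- v) - gj (ai + aj))"
      if "v \<in> face gk" for v
    proof -
      have "\<alpha> * gi (ai + aj + v) + \<beta> * gj (ai + aj + v) = - gk (ai + aj + v)"
        using comb(1) by simp
      also have "\<dots> < 0" using above that by (simp add: Lk)
      finally show ?thesis by (simp add: Li Lj algebra_simps)
    qed
    have "\<exists>b\<in>cball 0 1. gi (ai + aj) < gi b \<and> gj (ai + aj) < gj b"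
      using zk wk gi gj comb(2,3) q p sep[OF zk] sep[OF wk]
      by (intro convex_point_dominating[OF convex_cball, where p = "- zk" and q = "- wk"])
        (auto simp: dual_ball_linear)
    then obtain b where "b \<in> cball 0 1" "gi (ai + aj) < gi b" "gj (ai + aj) < gj b" by blast
    moreover have "gi (xi + xj) \<le> gi (ai + aj)" "gj (xi + xj) \<le> gj (ai + aj)"
      using ai aj xi xj by (auto simp: Li Lj)
    ultimately show False
      using face_sum_not_dominated[OF dim2 gi gj xi xj x] by fastforce
  qed
qed

lemma convex_linear_intermediate:
  assumes "convex S" "a \<in> S" "b \<in> S" "linear (h :: 'a::real_vector \<Rightarrow> real)" "h a \<le> c" "c \<le> h b"
  shows "\<exists>p\<in>S. h p = c"
proof -
  have "c \<in> closed_segment (h a) (h b)"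
    using assms(5,6) by (auto simp: closed_segment_eq_real_ivl)
  then have "c \<in> h ` closed_segment a b" by (simp add: closed_segment_linear_image assms(4))
  moreover have "closed_segment a b \<subseteq> S" using assms(1-3) by (simp add: closed_segment_subset)
  ultimately show ?thesis by blast
qed

text \<open>Both xi + xj and some point of face gk lie on the line gi = 0 and have norm 1, so they are
  equal up to sign; either sign yields a sum with gk = -1.\<close>
lemma face_sum_below_of_opposite:
  fixes gi gj gk :: "'a::real_normed_vector \<Rightarrow> real"
  assumes dim2: "dim (UNIV :: 'a set) = 2"
    and gi: "dual_ball gi" and gk: "dual_ball gk" and opp: "\<forall>x. gj x = - gi x"
    and "unit_sum_pair gi gj" "unit_sum_pair gi gk" "unit_sum_pair gj gk"
  shows "face_sum_below gi gj gk"
proof -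
  have li: "linear gi" and lk: "linear gk" using gi gk by (simp_all add: dual_ball_linear)
  note Li = linear_functional_eqs[OF li] and Lk = linear_functional_eqs[OF lk]
  obtain xi xj where xi: "xi \<in> face gi" and xj: "xj \<in> face gj" and x: "norm (xi + xj) = 1"
    using \<open>unit_sum_pair gi gj\<close> unfolding unit_sum_pair_def by blast
  obtain zi zk where zi: "zi \<in> face gi" and zk: "zk \<in> face gk" and z: "norm (zi + zk) = 1"
    using \<open>unit_sum_pair gi gk\<close> unfolding unit_sum_pair_def by blast
  obtain wj wk where wj: "wj \<in> face gj" and wk: "wk \<in> face gk" and w: "norm (wj + wk) = 1"
    using \<open>unit_sum_pair gj gk\<close> unfolding unit_sum_pair_def by blast
  have "gi zk \<le> 0" "0 \<le> gi wk"
    using dual_ball_abs_le[OF gi, of "zi + zk"] dual_ball_abs_le[OF gi, of "wj + wk"] z w zi wj opp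
    by (auto simp: Li)
  then obtain p where p: "p \<in> face gk" "gi p = 0"
    using convex_linear_intermediate[OF convex_face[OF lk] zk wk li, of 0] by auto
  then have "norm p = 1" using dual_ball_abs_le[OF gk, of p] by auto
  have "gi (xi + xj) = 0" using xi xj opp by (simp add: Li)
  then obtain t where t: "xi + xj = t *\<^sub>R p"
    using dim2_kernel_line[OF dim2 li _ _ p(2)] xi \<open>norm p = 1\<close> by fastforce
  then have "\<bar>t\<bar> = 1" using x \<open>norm p = 1\<close> by simp
  then consider "t = -1" | "t = 1" by linarith
  then show ?thesis
  proof cases
    case 1
    then have "gk (xi + xj) = -1" using t p by (simp add: Lk)
    then show ?thesis using xi xj unfolding face_sum_below_def by force
  next
    case 2
    then have "gk (xi + xj) = 1" using t p by simp
    moreover have "- xj + - xi = - (xi + xj)" by simp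
    ultimately have "gk (- xj + - xi) = -1" by (simp only: Lk(3))
    moreover have "- xj \<in> face gi" "- xi \<in> face gj" using xi xj opp by (simp_all add: Li)
    ultimately show ?thesis unfolding face_sum_below_def by (metis order_refl)
  qed
qed

lemma face_sum_below_of_nonneg_relation:
  fixes gi gj gk :: "'a::real_normed_vector \<Rightarrow> real"
  assumes dim2: "dim (UNIV :: 'a set) = 2"
    and gi: "dual_ball gi" and gj: "dual_ball gj" and gk: "dual_ball gk"
    and rel: "\<forall>x. a * gi x + b * gj x + c * gk x = 0" "(a, b, c) \<noteq> (0, 0, 0)"
    and "0 \<le> a" "0 \<le> b" "0 \<le> c"
    and ij: "unit_sum_pair gi gj" and ik: "unit_sum_pair gi gk" and jk: "unit_sum_pair gj gk"
  shows "face_sum_below gi gj gk"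
proof (cases "c = 0")
  case False
  have "- gk x = (a / c) * gi x + (b / c) * gj x" for x
  proof -
    have "(a / c) * gi x + (b / c) * gj x = (a * gi x + b * gj x) / c"
      by (simp add: add_divide_distrib)
    also have "a * gi x + b * gj x = - (c * gk x)" using rel(1)[rule_format, of x] by linarith
    finally show ?thesis using False by simp
  qed
  moreover have "0 \<le> a / c" "0 \<le> b / c" using assms(7-9) by simp_all
  ultimately show ?thesis
    using face_sum_below_of_nonneg_combination[OF dim2 gi gj gk _ _ _ ij ik jk] by blast
next
  case True
  obtain xi xj where "gi xi = 1" "gj xj = 1"
    using ij unfolding unit_sum_pair_def by auto
  have ab: "b * gj x = - (a * gi x)" for x using rel(1)[rule_format, of x] True by simp
  have "a \<noteq> 0" "b \<noteq> 0"
    using ab[of xi] ab[of xj] \<open>gi xi = 1\<close> \<open>gj xj = 1\<close> rel(2) True by auto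
  then have gj_eq: "\<forall>x. gj x = (- a / b) * gi x"
    using ab by (simp add: field_simps)
  then have "- a / b = -1" by (rule unit_sum_pair_proportional[OF gi gj ij])
  then have "\<forall>x. gj x = - gi x" using gj_eq by simp
  then show ?thesis using face_sum_below_of_opposite[OF dim2 gi gk _ ij ik jk] by blast
qed

text \<open>The unit sums with the face of gk force gk = \<alpha> (gi + gj), which is nonnegative on all three
  faces.\<close>
lemma in_origin_halfplane_of_relation:
  assumes gi: "dual_ball gi" and gj: "dual_ball gj" and gk: "dual_ball gk"
    and rel: "\<forall>x. a * gi x + b * gj x + c * gk x = 0" and "0 \<le> a" "0 \<le> b" "c < 0"
    and ik: "unit_sum_pair gi gk" and jk: "unit_sum_pair gj gk"
  shows "in_origin_halfplane (face gi \<union> face gj \<union> face gk)"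
proof -
  define \<alpha> \<beta> where "\<alpha> = a / - c" and "\<beta> = b / - c"
  have "0 \<le> \<alpha>" "0 \<le> \<beta>"
    using divide_nonneg_pos[of a "- c"] divide_nonneg_pos[of b "- c"] assms(5-7)
    by (simp_all add: \<alpha>_def \<beta>_def)
  have comb: "gk x = \<alpha> * gi x + \<beta> * gj x" for x
  proof -
    have "\<alpha> * gi x + \<beta> * gj x = (a * gi x + b * gj x) / - c"
      by (simp add: \<alpha>_def \<beta>_def add_divide_distrib)
    also have "a * gi x + b * gj x = - (c * gk x)" using rel[rule_format, of x] by linarith
    finally show ?thesis using assms(7) by simp
  qed
  have lk: "linear gk" using gk by (simp add: dual_ball_linear)
  obtain zi zk where zi: "zi \<in> face gi" and zk: "zk \<in> face gk" and z: "norm (zi + zk) = 1"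
    using ik unfolding unit_sum_pair_def by blast
  obtain wj wk where wj: "wj \<in> face gj" and wk: "wk \<in> face gk" and w: "norm (wj + wk) = 1"
    using jk unfolding unit_sum_pair_def by blast
  have ge: "-1 \<le> gi x" "-1 \<le> gj x" if "norm x \<le> 1" for x
    using dual_ball_abs_le[OF gi, of x] dual_ball_abs_le[OF gj, of x] that by auto
  have "gk zi \<le> 0" "gk wj \<le> 0"
    using dual_ball_abs_le[OF gk, of "zi + zk"] dual_ball_abs_le[OF gk, of "wj + wk"] z w zk wk
    by (auto simp: linear_functional_eqs[OF lk])
  then have "\<alpha> + \<beta> * gj zi \<le> 0" "\<alpha> * gi wj + \<beta> \<le> 0" using comb zi wj by auto
  moreover have "- \<beta> \<le> \<beta> * gj zi" "- \<alpha> \<le> \<alpha> * gi wj"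
    using mult_left_mono[OF ge(2), of zi \<beta>] mult_left_mono[OF ge(1), of wj \<alpha>]
      \<open>0 \<le> \<alpha>\<close> \<open>0 \<le> \<beta>\<close> zi wj by auto
  ultimately have "\<alpha> = \<beta>" by linarith
  have "face gi \<union> face gj \<union> face gk \<subseteq> {x. - gk x \<le> 0}"
  proof
    fix x assume x: "x \<in> face gi \<union> face gj \<union> face gk"
    have "0 \<le> \<alpha> * (1 + gj x)" "0 \<le> \<alpha> * (gi x + 1)"
      using x ge[of x] \<open>0 \<le> \<alpha>\<close> by auto
    then show "x \<in> {x. - gk x \<le> 0}" using x comb[of x] \<open>\<alpha> = \<beta>\<close> by (auto simp: algebra_simps)
  qed
  moreover have "linear (\<lambda>x. - gk x)" using lk by (simp add: linear_compose_neg)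
  moreover have "- gk zk \<noteq> 0" using zk by simp
  ultimately show ?thesis unfolding in_origin_halfplane_def by blast
qed

lemma face_sum_on_line:
  assumes "dual_ball gi" "dual_ball gj" "dual_ball gk"
    and "unit_sum_pair gi gj" "face_sum_below gi gj gk"
  shows "\<exists>a\<in>face gi. \<exists>b\<in>face gj. gk (a + b) = -1"
proof -
  have li: "linear gi" and lj: "linear gj" and lk: "linear gk"
    using assms(1-3) by (simp_all add: dual_ball_linear)
  let ?h = "\<lambda>p. gk (fst p + snd p)"
  have "linear ?h" by (rule linearI) (simp_all add: linear_functional_eqs[OF lk] algebra_simps)
  obtain xi xj where x: "(xi, xj) \<in> face gi \<times> face gj" "norm (xi + xj) = 1"
    using assms(4) unfolding unit_sum_pair_def by blast
  obtain ai aj where a: "(ai, aj) \<in> face gi \<times> face gj" "gk (ai + aj) \<le> -1"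
    using assms(5) unfolding face_sum_below_def by blast
  have "-1 \<le> gk (xi + xj)" using dual_ball_abs_le[OF assms(3), of "xi + xj"] x(2) by linarith
  then have "\<exists>p\<in>face gi \<times> face gj. ?h p = -1"
    using convex_linear_intermediate[OF convex_Times[OF convex_face[OF li] convex_face[OF lj]]
        a(1) x(1) \<open>linear ?h\<close>] a(2) by simp
  then show ?thesis by force
qed

section \<open>Zero-sum triples\<close>

definition trivial_common_kernel :: "('a::real_vector \<Rightarrow> real) \<Rightarrow> ('a \<Rightarrow> real) \<Rightarrow> bool" where
  "trivial_common_kernel g h \<longleftrightarrow> (\<forall>x. g x = 0 \<longrightarrow> h x = 0 \<longrightarrow> x = 0)"

lemma zero_sum_triple_segment:
  assumes "linear g2" "linear g3" "trivial_common_kernel g2 g3"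
    and x: "x1 + x2 + x3 = 0" "g2 x2 = 1" "g3 x3 = 1"
    and y: "y1 + y2 + y3 = 0" "g2 y2 = 1" "g3 y3 = 1"
    and z: "z1 + z2 + z3 = 0" "g2 z2 = 1" "g3 z3 = 1"
    and "x1 \<in> closed_segment y1 z1"
  shows "x2 \<in> closed_segment y2 z2" "x3 \<in> closed_segment y3 z3"
proof -
  obtain u where u: "x1 = (1 - u) *\<^sub>R y1 + u *\<^sub>R z1" "0 \<le> u" "u \<le> 1"
    using assms(13) by (auto simp: in_segment)
  define d where "d = x2 - ((1 - u) *\<^sub>R y2 + u *\<^sub>R z2)"
  have "x3 = - (x1 + x2)" "y3 = - (y1 + y2)" "z3 = - (z1 + z2)"
    using x(1) y(1) z(1) by (metis minus_unique)+
  then have "x3 - ((1 - u) *\<^sub>R y3 + u *\<^sub>R z3)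
      = - (x1 + x2) - ((1 - u) *\<^sub>R - (y1 + y2) + u *\<^sub>R - (z1 + z2))" by simp
  also have "\<dots> = - d" unfolding d_def u(1) by (simp add: algebra_simps)
  finally have "x3 - ((1 - u) *\<^sub>R y3 + u *\<^sub>R z3) = - d" .
  moreover have "g2 d = 0" "g3 (x3 - ((1 - u) *\<^sub>R y3 + u *\<^sub>R z3)) = 0"
    using x y z by (simp_all add: d_def linear_functional_eqs assms(1,2) algebra_simps)
  ultimately have "d = 0"
    using assms(3) linear_functional_eqs(3)[OF assms(2)] unfolding trivial_common_kernel_def by auto
  then have "x2 = (1 - u) *\<^sub>R y2 + u *\<^sub>R z2" "x3 = (1 - u) *\<^sub>R y3 + u *\<^sub>R z3"
    using \<open>x3 - _ = - d\<close> by (simp_all add: d_def)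
  then show "x2 \<in> closed_segment y2 z2" "x3 \<in> closed_segment y3 z3"
    using u(2,3) by (auto simp: in_segment)
qed

lemma closed_segment_along_line:
  assumes "(s::real) \<in> closed_segment t r"
  shows "p + s *\<^sub>R e \<in> closed_segment (p + t *\<^sub>R e) (p + r *\<^sub>R e)"
proof -
  obtain v where "0 \<le> v" "v \<le> 1" "s = (1 - v) * t + v * r"
    using assms by (auto simp: in_segment)
  moreover have "p + ((1 - v) * t + v * r) *\<^sub>R e = (1 - v) *\<^sub>R (p + t *\<^sub>R e) + v *\<^sub>R (p + r *\<^sub>R e)"
    by (simp add: algebra_simps)
  ultimately show ?thesis unfolding in_segment by blast
qed

text \<open>A Helly-type step on the line {g1 = 1}: of the three first entries, one lies between the
  other two, and then so does the whole triple.\<close>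
lemma zero_sum_of_three_triples:
  assumes l1: "linear g1" and l2: "linear g2" and l3: "linear g3"
    and ker: "\<forall>d. g1 d = 0 \<longrightarrow> (\<exists>t. d = t *\<^sub>R e)" and tr: "trivial_common_kernel g2 g3"
    and u: "u1 + u2 + u3 = 0" "g1 u1 = 1" "u2 \<in> face g2" "u3 \<in> face g3"
    and v: "v1 + v2 + v3 = 0" "v1 \<in> face g1" "g2 v2 = 1" "v3 \<in> face g3"
    and w: "w1 + w2 + w3 = 0" "w1 \<in> face g1" "w2 \<in> face g2" "g3 w3 = 1"
  shows "\<exists>a1\<in>face g1. \<exists>a2\<in>face g2. \<exists>a3\<in>face g3. a1 + a2 + a3 = 0"
proof -
  note T = zero_sum_triple_segment[OF l2 l3 tr]
  have "g1 (v1 - u1) = 0" "g1 (w1 - u1) = 0"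
    using u(2) v(2) w(2) by (simp_all add: linear_functional_eqs[OF l1])
  then obtain sv sw where "v1 - u1 = sv *\<^sub>R e" "w1 - u1 = sw *\<^sub>R e" using ker by blast
  then have "v1 = u1 + sv *\<^sub>R e" "w1 = u1 + sw *\<^sub>R e" by (simp_all add: algebra_simps)
  moreover have "u1 = u1 + 0 *\<^sub>R e" by simp
  moreover have "(0::real) \<in> closed_segment sv sw \<or> sv \<in> closed_segment 0 sw \<or> sw \<in> closed_segment 0 sv"
    by (auto simp: closed_segment_eq_real_ivl)
  ultimately consider "u1 \<in> closed_segment v1 w1" | "v1 \<in> closed_segment u1 w1"
    | "w1 \<in> closed_segment u1 v1"
    by (metis closed_segment_along_line)
  then show ?thesis
  proof cases
    case 1
    then have "u1 \<in> face g1" using closed_segment_subset[OF v(2) w(2) convex_face[OF l1]] by blast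
    then show ?thesis using u by blast
  next
    case 2
    then have "v2 \<in> face g2"
      using T(1)[OF v(1,3) _ u(1) _ _ w(1) _ w(4)] u v w closed_segment_subset[OF u(3) w(3) convex_face[OF l2]]
      by auto
    then show ?thesis using v by blast
  next
    case 3
    then have "w3 \<in> face g3"
      using T(2)[OF w(1) _ w(4) u(1) _ _ v(1) v(3)] u v w closed_segment_subset[OF u(4) v(4) convex_face[OF l3]]
      by auto
    then show ?thesis using w by blast
  qed
qed

lemma zero_sum_of_face_sums_below:
  fixes g1 g2 g3 :: "'a::real_normed_vector \<Rightarrow> real"
  assumes dim2: "dim (UNIV :: 'a set) = 2"
    and d1: "dual_ball g1" and d2: "dual_ball g2" and d3: "dual_ball g3"
    and tr: "trivial_common_kernel g2 g3"
    and p12: "unit_sum_pair g1 g2" and p13: "unit_sum_pair g1 g3" and p23: "unit_sum_pair g2 g3"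
    and c1: "face_sum_below g2 g3 g1" and c2: "face_sum_below g1 g3 g2"
    and c3: "face_sum_below g1 g2 g3"
  shows "\<exists>a1\<in>face g1. \<exists>a2\<in>face g2. \<exists>a3\<in>face g3. a1 + a2 + a3 = 0"
proof -
  have l1: "linear g1" and l2: "linear g2" and l3: "linear g3"
    using d1 d2 d3 by (simp_all add: dual_ball_linear)
  obtain r2 r3 where r: "r2 \<in> face g2" "r3 \<in> face g3" "g1 (r2 + r3) = -1"
    using face_sum_on_line[OF d2 d3 d1 p23 c1] by blast
  obtain q1 q3 where q: "q1 \<in> face g1" "q3 \<in> face g3" "g2 (q1 + q3) = -1"
    using face_sum_on_line[OF d1 d3 d2 p13 c2] by blast
  obtain p1 p2 where p: "p1 \<in> face g1" "p2 \<in> face g2" "g3 (p1 + p2) = -1"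
    using face_sum_on_line[OF d1 d2 d3 p12 c3] by blast
  obtain e where e: "e \<noteq> 0" "g1 e = 0" using dim2_kernel_nonzero[OF dim2 l1] by blast
  have "g1 q1 \<noteq> 0" using q(1) by simp
  then have ker: "\<forall>d. g1 d = 0 \<longrightarrow> (\<exists>t. d = t *\<^sub>R e)"
    using dim2_kernel_line[OF dim2 l1 _ e] by blast
  show ?thesis
    using zero_sum_of_three_triples[OF l1 l2 l3 ker tr, of "- (r2 + r3)" r2 r3 q1 "- (q1 + q3)" q3
        p1 p2 "- (p1 + p2)"] r q p
    by (simp add: linear_functional_eqs l1 l2 l3)
qed

lemma opposite_of_nontrivial_common_kernel:
  fixes g h :: "'a::real_normed_vector \<Rightarrow> real"
  assumes dim2: "dim (UNIV :: 'a set) = 2"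
    and "dual_ball g" "dual_ball h" "unit_sum_pair g h" "\<not> trivial_common_kernel g h"
  shows "\<forall>x. h x = - g x"
proof -
  obtain d where "d \<noteq> 0" "g d = 0" "h d = 0"
    using assms(5) unfolding trivial_common_kernel_def by blast
  moreover obtain u where "g u = 1"
    using assms(4) unfolding unit_sum_pair_def by auto
  ultimately obtain l where "\<forall>x. h x = l * g x"
    using dim2_proportional_of_common_kernel[OF dim2, of g h u d] assms(2,3)
    by (auto simp: dual_ball_def)
  moreover have "l = -1" using unit_sum_pair_proportional[OF assms(2-4) calculation] .
  ultimately show ?thesis by simp
qed

lemma trivial_common_kernel_of_pairs:
  fixes g1 g2 g3 :: "'a::real_normed_vector \<Rightarrow> real"
  assumes dim2: "dim (UNIV :: 'a set) = 2"
    and d1: "dual_ball g1" and d2: "dual_ball g2" and d3: "dual_ball g3"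
    and p12: "unit_sum_pair g1 g2" and p13: "unit_sum_pair g1 g3" and p23: "unit_sum_pair g2 g3"
  shows "trivial_common_kernel g2 g3 \<or> trivial_common_kernel g1 g3"
proof (rule ccontr)
  assume "\<not> ?thesis"
  then have "\<forall>x. g3 x = - g2 x" "\<forall>x. g3 x = - g1 x"
    using opposite_of_nontrivial_common_kernel[OF dim2 d2 d3 p23]
      opposite_of_nontrivial_common_kernel[OF dim2 d1 d3 p13] by blast+
  then have "\<forall>x. g2 x = 1 * g1 x" by (metis minus_equation_iff mult_1)
  then have "(1::real) = -1" by (rule unit_sum_pair_proportional[OF d1 d2 p12])
  then show False by simp
qed

lemma perm3_mem_distinct:
  assumes "{i, j, k} = {1, 2, 3 :: nat}"
  shows "i \<in> {1, 2, 3}" "j \<in> {1, 2, 3}" "k \<in> {1, 2, 3}" "i \<noteq> j" "i \<noteq> k" "j \<noteq> k"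
proof -
  have "{i, j, k} \<subseteq> {1, 2, 3}" "card {i, j, k} = 3" by (simp_all add: assms)
  then show "i \<in> {1, 2, 3}" "j \<in> {1, 2, 3}" "k \<in> {1, 2, 3}" "i \<noteq> j" "i \<noteq> k" "j \<noteq> k"
    by (auto simp: card_insert_if split: if_splits)
qed

lemma perm3_sum:
  fixes f :: "nat \<Rightarrow> 'a::comm_monoid_add"
  assumes "{i, j, k} = {1, 2, 3 :: nat}"
  shows "f i + f j + f k = f 1 + f 2 + f 3"
proof -
  have "f i + f j + f k = sum f {i, j, k}" using perm3_mem_distinct[OF assms] by (simp add: add.assoc)
  then show ?thesis by (simp add: assms add.assoc)
qed

lemma perm3_Un:
  assumes "{i, j, k} = {1, 2, 3 :: nat}"
  shows "A i \<union> A j \<union> A k = A 1 \<union> A 2 \<union> A 3"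
proof -
  have "(\<Union>l\<in>{i, j, k}. A l) = (\<Union>l\<in>{1, 2, 3}. A l)" by (simp only: assms)
  then show ?thesis by (simp add: Un_assoc)
qed

lemma perm3_same_sign:
  fixes x :: "nat \<Rightarrow> real"
  assumes "\<And>i j k. {i, j, k} = {1, 2, 3} \<Longrightarrow> 0 \<le> x i \<Longrightarrow> 0 \<le> x j \<Longrightarrow> 0 \<le> x k"
    and "\<And>i j k. {i, j, k} = {1, 2, 3} \<Longrightarrow> x i \<le> 0 \<Longrightarrow> x j \<le> 0 \<Longrightarrow> x k \<le> 0"
  shows "(0 \<le> x 1 \<and> 0 \<le> x 2 \<and> 0 \<le> x 3) \<or> (x 1 \<le> 0 \<and> x 2 \<le> 0 \<and> x 3 \<le> 0)"
proof -
  have "{1, 2, 3} = {1, 2, 3 :: nat}" "{1, 3, 2} = {1, 2, 3 :: nat}" "{2, 3, 1} = {1, 2, 3 :: nat}"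
    by auto
  then show ?thesis using assms by (smt (verit))
qed

lemma nonneg_relation_of_not_in_origin_halfplane:
  fixes g :: "nat \<Rightarrow> 'a::real_normed_vector \<Rightarrow> real"
  assumes dim2: "dim (UNIV :: 'a set) = 2"
    and dual: "\<And>i. i \<in> {1, 2, 3} \<Longrightarrow> dual_ball (g i)"
    and pairs: "\<And>i j. i \<in> {1, 2, 3} \<Longrightarrow> j \<in> {1, 2, 3} \<Longrightarrow> i \<noteq> j \<Longrightarrow> unit_sum_pair (g i) (g j)"
    and nothalf: "\<not> in_origin_halfplane (face (g 1) \<union> face (g 2) \<union> face (g 3))"
  obtains \<mu> :: "nat \<Rightarrow> real" where "\<forall>x. \<mu> 1 * g 1 x + \<mu> 2 * g 2 x + \<mu> 3 * g 3 x = 0"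
    "(\<mu> 1, \<mu> 2, \<mu> 3) \<noteq> (0, 0, 0)" "0 \<le> \<mu> 1" "0 \<le> \<mu> 2" "0 \<le> \<mu> 3"
proof -
  define rel where "rel \<mu> \<longleftrightarrow> (\<forall>x. \<mu> 1 * g 1 x + \<mu> 2 * g 2 x + \<mu> 3 * g 3 x = 0)"
    for \<mu> :: "nat \<Rightarrow> real"
  have sign: "0 \<le> \<mu> k" if "rel \<mu>" "{i, j, k} = {1, 2, 3}" "0 \<le> \<mu> i" "0 \<le> \<mu> j" for \<mu> i j k
  proof (rule ccontr)
    assume "\<not> 0 \<le> \<mu> k"
    then have "\<mu> k < 0" by simp
    note ijk = perm3_mem_distinct[OF that(2)]
    have "\<mu> i * g i x + \<mu> j * g j x + \<mu> k * g k x = 0" for x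
      using that(1) perm3_sum[OF that(2), of "\<lambda>l. \<mu> l * g l x"] by (simp add: rel_def)
    then have "in_origin_halfplane (face (g i) \<union> face (g j) \<union> face (g k))"
      using in_origin_halfplane_of_relation[OF dual[OF ijk(1)] dual[OF ijk(2)] dual[OF ijk(3)] _
          that(3,4) \<open>\<mu> k < 0\<close> pairs[OF ijk(1,3,5)] pairs[OF ijk(2,3,6)]] by blast
    then show False using nothalf perm3_Un[OF that(2), of "\<lambda>l. face (g l)"] by simp
  qed
  have lin: "linear (g 1)" "linear (g 2)" "linear (g 3)"
    using dual[of 1] dual[of 2] dual[of 3] by (simp_all add: dual_ball_linear)
  obtain a b c where abc: "(a, b, c) \<noteq> (0, 0, 0)" "\<forall>x. a * g 1 x + b * g 2 x + c * g 3 x = 0"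
    using dim2_functionals_dependent[OF dim2 lin] by (elim exE conjE)
  define coef where "coef l = (if l = 1 then a else if l = 2 then b else c)" for l :: nat
  have "rel coef" using abc(2) by (simp add: rel_def coef_def)
  then have "rel (\<lambda>l. - coef l)"
    unfolding rel_def by (metis add.inverse_neutral minus_add_distrib mult_minus_left)
  have "(0 \<le> coef 1 \<and> 0 \<le> coef 2 \<and> 0 \<le> coef 3) \<or> (coef 1 \<le> 0 \<and> coef 2 \<le> 0 \<and> coef 3 \<le> 0)"
  proof (rule perm3_same_sign)
    show "0 \<le> coef k" if "{i, j, k} = {1, 2, 3}" "0 \<le> coef i" "0 \<le> coef j" for i j k
      using sign[OF \<open>rel coef\<close> that] .
    show "coef k \<le> 0" if "{i, j, k} = {1, 2, 3}" "coef i \<le> 0" "coef j \<le> 0" for i j k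
      using sign[OF \<open>rel (\<lambda>l. - coef l)\<close> that(1)] that(2,3) by simp
  qed
  moreover have "(coef 1, coef 2, coef 3) \<noteq> (0, 0, 0)" using abc(1) by (simp add: coef_def)
  ultimately show thesis
    using that[of coef] that[of "\<lambda>l. - coef l"] \<open>rel coef\<close> \<open>rel (\<lambda>l. - coef l)\<close>
    unfolding rel_def by auto
qed

lemma zero_sum_in_faces:
  fixes g :: "nat \<Rightarrow> 'a::real_normed_vector \<Rightarrow> real"
  assumes dim2: "dim (UNIV :: 'a set) = 2"
    and dual: "\<And>i. i \<in> {1, 2, 3} \<Longrightarrow> dual_ball (g i)"
    and pairs: "\<And>i j. i \<in> {1, 2, 3} \<Longrightarrow> j \<in> {1, 2, 3} \<Longrightarrow> i \<noteq> j \<Longrightarrow> unit_sum_pair (g i) (g j)"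
    and nothalf: "\<not> in_origin_halfplane (face (g 1) \<union> face (g 2) \<union> face (g 3))"
  shows "\<exists>a1\<in>face (g 1). \<exists>a2\<in>face (g 2). \<exists>a3\<in>face (g 3). a1 + a2 + a3 = 0"
proof -
  obtain \<mu> :: "nat \<Rightarrow> real" where \<mu>: "\<forall>x. \<mu> 1 * g 1 x + \<mu> 2 * g 2 x + \<mu> 3 * g 3 x = 0"
    "(\<mu> 1, \<mu> 2, \<mu> 3) \<noteq> (0, 0, 0)" "0 \<le> \<mu> 1" "0 \<le> \<mu> 2" "0 \<le> \<mu> 3"
    by (rule nonneg_relation_of_not_in_origin_halfplane[OF dim2 dual pairs nothalf])
  have below: "face_sum_below (g i) (g j) (g k)" if "{i, j, k} = {1, 2, 3}" for i j k
  proof (rule face_sum_below_of_nonneg_relation[OF dim2 dual dual dual])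
    note ijk = perm3_mem_distinct[OF that]
    show "\<forall>x. \<mu> i * g i x + \<mu> j * g j x + \<mu> k * g k x = 0"
    proof
      fix x show "\<mu> i * g i x + \<mu> j * g j x + \<mu> k * g k x = 0"
        using \<mu>(1) perm3_sum[OF that, of "\<lambda>l. \<mu> l * g l x"] by simp
    qed
    show "(\<mu> i, \<mu> j, \<mu> k) \<noteq> (0, 0, 0)" using \<mu>(2) ijk by auto
  qed (use \<mu> perm3_mem_distinct[OF that] pairs in auto)
  have c: "face_sum_below (g 2) (g 3) (g 1)" "face_sum_below (g 1) (g 3) (g 2)"
    "face_sum_below (g 1) (g 2) (g 3)" "face_sum_below (g 2) (g 1) (g 3)"
    by (rule below; auto)+
  have d1: "dual_ball (g 1)" and d2: "dual_ball (g 2)" and d3: "dual_ball (g 3)"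
    using dual by simp_all
  have p12: "unit_sum_pair (g 1) (g 2)" and p13: "unit_sum_pair (g 1) (g 3)"
    and p23: "unit_sum_pair (g 2) (g 3)" and p21: "unit_sum_pair (g 2) (g 1)"
    using pairs by simp_all
  consider "trivial_common_kernel (g 2) (g 3)" | "trivial_common_kernel (g 1) (g 3)"
    using trivial_common_kernel_of_pairs[OF dim2 d1 d2 d3 p12 p13 p23] by blast
  then show ?thesis
  proof cases
    case 1
    then show ?thesis using zero_sum_of_face_sums_below[OF dim2 d1 d2 d3 _ p12 p13 p23 c(1-3)] by blast
  next
    case 2
    then obtain a2 a1 a3 where "a2 \<in> face (g 2)" "a1 \<in> face (g 1)" "a3 \<in> face (g 3)"
      "a2 + a1 + a3 = 0"
      using zero_sum_of_face_sums_below[OF dim2 d2 d1 d3 _ p21 p23 p13 c(2,1,4)] by blast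
    moreover from \<open>a2 + a1 + a3 = 0\<close> have "a1 + a2 + a3 = 0" by (simp add: ac_simps)
    ultimately show ?thesis by blast
  qed
qed

theorem lemma5p6:
  fixes L :: "nat \<Rightarrow> 'a::real_normed_vector set"
  assumes dim2: "dim (UNIV :: 'a set) = 2"
    and supp: "\<And>i. i \<in> {1,2,3} \<Longrightarrow> supporting_line (L i) (cball 0 1)"
    and pairs: "\<And>i j. i \<in> {1,2,3} \<Longrightarrow> j \<in> {1,2,3} \<Longrightarrow> i \<noteq> j \<Longrightarrow>
                  \<exists>ai aj. ai \<in> cball 0 1 \<inter> L i \<and> aj \<in> cball 0 1 \<inter> L j \<and> norm (ai + aj) = 1"
    and nothalf: "\<not> in_origin_halfplane
                    ((cball 0 1 \<inter> L 1) \<union> (cball 0 1 \<inter> L 2) \<union> (cball 0 1 \<inter> L 3))"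
  shows "\<exists>a1 a2 a3. a1 \<in> cball 0 1 \<inter> L 1 \<and> a2 \<in> cball 0 1 \<inter> L 2 \<and>
                    a3 \<in> cball 0 1 \<inter> L 3 \<and> a1 + a2 + a3 = 0"
proof -
  obtain g where g: "\<And>i. i \<in> {1, 2, 3} \<Longrightarrow> dual_ball (g i) \<and> L i = {x. g i x = 1}"
    using dual_ball_of_supporting_line[OF supp] by metis
  then have face: "cball 0 1 \<inter> L i = face (g i)" if "i \<in> {1, 2, 3}" for i
    using that by (simp add: face_def)
  have "\<exists>a1\<in>face (g 1). \<exists>a2\<in>face (g 2). \<exists>a3\<in>face (g 3). a1 + a2 + a3 = 0"
  proof (rule zero_sum_in_faces[OF dim2])
    show "unit_sum_pair (g i) (g j)" if "i \<in> {1, 2, 3}" "j \<in> {1, 2, 3}" "i \<noteq> j" for i j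
      using pairs[OF that] unfolding unit_sum_pair_def face[OF that(1), symmetric]
        face[OF that(2), symmetric] by blast
  qed (use g face nothalf in auto)
  then show ?thesis using face[of 1] face[of 2] face[of 3] by (simp del: mem_face) blast
qed

end
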